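(* Consider a power network whose graph $(\mathcal{V},\mathcal{E})$, $\mathcal{V}=\{1,\dots,n\}$, is a tree, with fixed voltage magnitudes $|V_i|=\overline{V}_i>0$ at every bus and, for every line $(i,k)\in\mathcal{E}$, a local angle constraint $\underline{\theta}_{ik}\le\theta_{ik}\le\overline{\theta}_{ik}$ with $\underline{\theta}_{ik}\in[-\pi,0]$, $\overline{\theta}_{ik}\in[0,\pi]$ (and no other constraints). Let $\mathcal{F}=\prod_{(i,k)\in\mathcal{E}}\mathcal{F}_{ik}$ be the flow region and $\mathcal{P}=\mathbf{A}\mathcal{F}$ the injection region. Then $\mathcal{O}(\mathcal{P})=\mathcal{O}(\mathrm{conv}(\mathcal{P}))$.
   Context: Each line $(i,k)\in\mathcal{E}$ has admittance $y_{ik}=g_{ik}-jb_{ik}$ with $g_{ik},b_{ik}\ge0$. For a line $(i,k)$ and angle difference $\theta_{ik}=\theta_i-\theta_k$ of the bus voltage phases, the flows are $P_{ik}=\overline{V}_i^2 g_{ik}+\overline{V}_i\overline{V}_k b_{ik}\sin\theta_{ik}-\overline{V}_i\overline{V}_k g_{ik}\cos\theta_{ik}$ and $P_{ki}=\overline{V}_k^2 g_{ik}-\overline{V}_i\overline{V}_k b_{ik}\sin\theta_{ik}-\overline{V}_i\overline{V}_k g_{ik}\cos\theta_{ik}$. The two-bus flow region $\mathcal{F}_{ik}\subset\mathbb{R}^2$ is the set of pairs $(P_{ik},P_{ki})$ obtained as $\theta_{ik}$ ranges over $[\underline{\theta}_{ik},\overline{\theta}_{ik}]$; $\mathcal{F}\subset\mathbb{R}^{2|\mathcal{E}|}$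 is the product of these sets (one coordinate per ordered pair $(i,k)$ and $(k,i)$). $\mathbf{A}$ is the $n\times 2|\mathcal{E}|$ matrix with $A(i,(k,l))=1$ if $i=k$ and $0$ otherwise, so that $(\mathbf{A}\mathbf{f})_i=P_i=\sum_{k\sim i}P_{ik}$ is the net real power injection at bus $i$. For $\mathcal{A}\subseteq\mathbb{R}^m$, $\mathcal{O}(\mathcal{A})$ is the set of Pareto-optimal points of $\mathcal{A}$ (points $x\in\mathcal{A}$ such that no $y\in\mathcal{A}$ satisfies $y\le x$ componentwise with strict inequality in some coordinate), and $\mathrm{conv}$ denotes convex hull. *)

theory Defs
  imports "HOL-Analysis.Analysis"
begin

text \<open>Buses are the elements of a finite type 'n (so n = CARD('n)).
  Lines are given as a set E of ordered pairs (i,k), each physical line listed once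
  (with a fixed orientation, to which g, b and the angle bounds refer).\<close>

definition adj :: "('n \<times> 'n) set \<Rightarrow> ('n \<times> 'n) set" where
  "adj E = E \<union> converse E"

definition simple_lines :: "('n \<times> 'n) set \<Rightarrow> bool" where
  "simple_lines E \<longleftrightarrow> (\<forall>(i,k)\<in>E. i \<noteq> k \<and> (k,i) \<notin> E)"

definition graph_connected :: "('n \<times> 'n) set \<Rightarrow> bool" where
  "graph_connected E \<longleftrightarrow> (\<forall>i j. (i,j) \<in> (adj E)\<^sup>*)"

text \<open>A tree: a connected graph in which every edge is a bridge (minimally connected,
  i.e. connected and acyclic).\<close>
definition is_tree :: "('n \<times> 'n) set \<Rightarrow> bool" where
  "is_tree E \<longleftrightarrow> simple_lines E \<and> graph_connected E \<and>
     (\<forall>e\<in>E. (fst e, snd e) \<notin> (adj (E - {e}))\<^sup>*)"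

definition Pik :: "real \<Rightarrow> real \<Rightarrow> real \<Rightarrow> real \<Rightarrow> real \<Rightarrow> real" where
  "Pik Vi Vk g b \<theta> = Vi^2 * g + Vi * Vk * b * sin \<theta> - Vi * Vk * g * cos \<theta>"

definition Pki :: "real \<Rightarrow> real \<Rightarrow> real \<Rightarrow> real \<Rightarrow> real \<Rightarrow> real" where
  "Pki Vi Vk g b \<theta> = Vk^2 * g - Vi * Vk * b * sin \<theta> - Vi * Vk * g * cos \<theta>"

definition flow_region_line ::
  "real \<Rightarrow> real \<Rightarrow> real \<Rightarrow> real \<Rightarrow> real \<Rightarrow> real \<Rightarrow> (real \<times> real) set" where
  "flow_region_line Vi Vk g b thlo thhi =
     (\<lambda>\<theta>. (Pik Vi Vk g b \<theta>, Pki Vi Vk g b \<theta>)) ` {thlo..thhi}"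

text \<open>Flow region F: flow vectors f indexed by ordered pairs (one coordinate per
  (i,k) and (k,i)); coordinates not belonging to a line are fixed to 0.\<close>
definition flow_region ::
  "('n \<times> 'n) set \<Rightarrow> ('n \<Rightarrow> real) \<Rightarrow> ('n \<times> 'n \<Rightarrow> real) \<Rightarrow> ('n \<times> 'n \<Rightarrow> real)
   \<Rightarrow> ('n \<times> 'n \<Rightarrow> real) \<Rightarrow> ('n \<times> 'n \<Rightarrow> real) \<Rightarrow> ('n \<times> 'n \<Rightarrow> real) set" where
  "flow_region E V g b thlo thhi =
     {f. (\<forall>(i,k)\<in>E. (f (i,k), f (k,i)) \<in>
            flow_region_line (V i) (V k) (g (i,k)) (b (i,k)) (thlo (i,k)) (thhi (i,k)))
         \<and> (\<forall>p. p \<notin> adj E \<longrightarrow> f p = 0)}"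

definition inj_map :: "('n::finite \<times> 'n) set \<Rightarrow> ('n \<times> 'n \<Rightarrow> real) \<Rightarrow> real ^ 'n" where
  "inj_map E f = (\<chi> i. \<Sum>p\<in>{p \<in> adj E. fst p = i}. f p)"

definition injection_region ::
  "('n::finite \<times> 'n) set \<Rightarrow> ('n \<Rightarrow> real) \<Rightarrow> ('n \<times> 'n \<Rightarrow> real) \<Rightarrow> ('n \<times> 'n \<Rightarrow> real)
   \<Rightarrow> ('n \<times> 'n \<Rightarrow> real) \<Rightarrow> ('n \<times> 'n \<Rightarrow> real) \<Rightarrow> (real ^ 'n) set" where
  "injection_region E V g b thlo thhi = inj_map E ` flow_region E V g b thlo thhi"

definition pareto :: "(real ^ 'n) set \<Rightarrow> (real ^ 'n) set" where
  "pareto A = {x \<in> A. \<not> (\<exists>y\<in>A. (\<forall>i. y $ i \<le> x $ i) \<and> (\<exists>i. y $ i < x $ i))}"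

end

theory Submission
  imports Defs
begin

text \<open>The injection region P is the linear image of the flow region, so it suffices to show that
  every convex combination of two flow vectors dominates, line by line, a flow vector. Then the
  upper set P + R^n_+ is convex, hence contains conv P, and a set and any superset inside its upper
  set have the same Pareto points. On a single line the flows depend on the angle only through
  (sin, -cos) with nonnegative coefficients (g >= 0). Averaging two angles of [lo, hi] gives a point
  (k, s) of the unit disc; the angle arcsin s lies again in [lo, hi] (because lo <= 0 <= hi and
  |lo|, |hi| <= pi), has sine s and cosine sqrt (1 - s^2) >= k, so its flows are no larger.\<close>

lemma arcsin_le_of_le_sin:
  fixes s t h :: real
  assumes "0 \<le> s" "s \<le> sin t" "- pi \<le> t" "t \<le> h" "0 \<le> h"
  shows "arcsin s \<le> h"
proof (cases "t < 0")
  case True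
  have "0 \<le> sin (- t)" using True assms(3) by (intro sin_ge_zero) auto
  with assms(1,2) have "s = 0" by simp
  with assms(5) show ?thesis by simp
next
  case False
  show ?thesis
  proof (cases "t \<le> pi / 2")
    case True
    have "arcsin s \<le> arcsin (sin t)"
      using assms(1,2) by (intro arcsin_le_arcsin) auto
    also have "\<dots> = t" using True False by (intro arcsin_sin) auto
    finally show ?thesis using assms(4) by simp
  next
    case False
    have "arcsin s \<le> pi / 2"
      using assms(1,2) sin_le_one[of t] by (intro arcsin_ubound) linarith+
    with False assms(4) show ?thesis by linarith
  qed
qed

lemma arcsin_convex_comb_sin_le:
  fixes t1 t2 h u v :: real
  assumes "- pi \<le> t1" "t1 \<le> h" "- pi \<le> t2" "t2 \<le> h" "0 \<le> h"
    and "0 \<le> u" "0 \<le> v" "u + v = 1"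
  shows "arcsin (u * sin t1 + v * sin t2) \<le> h"
proof (cases "0 \<le> u * sin t1 + v * sin t2")
  case True
  have "u * sin t1 + v * sin t2 \<le> max (sin t1) (sin t2)"
    using assms(6-8) by (intro convex_bound_le) auto
  then show ?thesis
    using True assms(1-5) arcsin_le_of_le_sin
    by (cases "sin t1 \<le> sin t2") (auto simp: max_def)
next
  case False
  have "u * - sin t1 + v * - sin t2 \<le> 1"
    using assms(6-8) by (intro convex_bound_le) auto
  then have "- 1 \<le> u * sin t1 + v * sin t2" by simp
  then have "arcsin (u * sin t1 + v * sin t2) \<le> arcsin 0"
    using False by (intro arcsin_le_arcsin) auto
  with assms(5) show ?thesis by simp
qed

lemma square_convex_comb_le:
  fixes a d u v :: real
  assumes "0 \<le> u" "0 \<le> v" "u + v = 1"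
  shows "(u * a + v * d)\<^sup>2 \<le> u * a\<^sup>2 + v * d\<^sup>2"
proof -
  have v: "v = 1 - u" using assms(3) by simp
  have "u * a\<^sup>2 + v * d\<^sup>2 - (u * a + v * d)\<^sup>2 = u * v * (a - d)\<^sup>2"
    unfolding v by (simp add: power2_eq_square algebra_simps)
  moreover have "0 \<le> u * v * (a - d)\<^sup>2" using assms(1,2) by simp
  ultimately show ?thesis by linarith
qed

lemma arc_convex_comb_dominated:
  fixes lo hi t1 t2 u v :: real
  assumes "- pi \<le> lo" "lo \<le> 0" "0 \<le> hi" "hi \<le> pi"
    and "t1 \<in> {lo..hi}" "t2 \<in> {lo..hi}"
    and "0 \<le> u" "0 \<le> v" "u + v = 1"
  shows "\<exists>\<theta>\<in>{lo..hi}. sin \<theta> = u * sin t1 + v * sin t2 \<and> u * cos t1 + v * cos t2 \<le> cos \<theta>"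
proof -
  define s where "s = u * sin t1 + v * sin t2"
  define k where "k = u * cos t1 + v * cos t2"
  have "s \<le> 1" unfolding s_def using assms(7-9) by (intro convex_bound_le) auto
  moreover have "u * - sin t1 + v * - sin t2 \<le> 1"
    using assms(7-9) by (intro convex_bound_le) auto
  ultimately have s_bounds: "- 1 \<le> s" "s \<le> 1" unfolding s_def by auto
  have "s\<^sup>2 + k\<^sup>2 \<le> (u * (sin t1)\<^sup>2 + v * (sin t2)\<^sup>2) + (u * (cos t1)\<^sup>2 + v * (cos t2)\<^sup>2)"
    unfolding s_def k_def by (intro add_mono square_convex_comb_le assms(7-9))
  also have "\<dots> = u * ((sin t1)\<^sup>2 + (cos t1)\<^sup>2) + v * ((sin t2)\<^sup>2 + (cos t2)\<^sup>2)"
    by algebra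
  also have "\<dots> = 1" using assms(9) by simp
  finally have "k\<^sup>2 \<le> 1 - s\<^sup>2" by simp
  then have cos_ge: "k \<le> cos (arcsin s)"
    using s_bounds by (simp add: cos_arcsin real_le_rsqrt)
  have "arcsin s \<le> hi"
    unfolding s_def using assms by (intro arcsin_convex_comb_sin_le) auto
  moreover have "- arcsin s \<le> - lo"
  proof -
    have "arcsin (u * sin (- t1) + v * sin (- t2)) \<le> - lo"
      using assms by (intro arcsin_convex_comb_sin_le) auto
    then show ?thesis using s_bounds arcsin_minus[of s] by (simp add: s_def)
  qed
  ultimately have "arcsin s \<in> {lo..hi}" by simp
  moreover have "sin (arcsin s) = s" using s_bounds by simp
  ultimately show ?thesis using cos_ge unfolding s_def k_def by blast
qed

lemma flow_region_line_convex_comb_dominated: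
  fixes Vi Vk g b lo hi u v :: real
  assumes "- pi \<le> lo" "lo \<le> 0" "0 \<le> hi" "hi \<le> pi" "0 \<le> g" "0 \<le> Vi * Vk"
    and "p \<in> flow_region_line Vi Vk g b lo hi" "q \<in> flow_region_line Vi Vk g b lo hi"
    and "0 \<le> u" "0 \<le> v" "u + v = 1"
  shows "\<exists>r\<in>flow_region_line Vi Vk g b lo hi.
           fst r \<le> u * fst p + v * fst q \<and> snd r \<le> u * snd p + v * snd q"
proof -
  obtain t1 t2 where t: "t1 \<in> {lo..hi}" "t2 \<in> {lo..hi}"
    and p: "p = (Pik Vi Vk g b t1, Pki Vi Vk g b t1)"
    and q: "q = (Pik Vi Vk g b t2, Pki Vi Vk g b t2)"
    using assms(7,8) unfolding flow_region_line_def by blast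
  define s where "s = u * sin t1 + v * sin t2"
  define k where "k = u * cos t1 + v * cos t2"
  obtain \<theta> where \<theta>: "\<theta> \<in> {lo..hi}" "sin \<theta> = s" "k \<le> cos \<theta>"
    using arc_convex_comb_dominated[OF assms(1-4) t assms(9-11)] unfolding s_def k_def by blast
  have v: "v = 1 - u" using assms(11) by simp
  have "u * Pik Vi Vk g b t1 + v * Pik Vi Vk g b t2 = Vi\<^sup>2 * g + Vi * Vk * b * s - Vi * Vk * g * k"
    unfolding Pik_def s_def k_def v by (simp add: algebra_simps)
  moreover have "u * Pki Vi Vk g b t1 + v * Pki Vi Vk g b t2 = Vk\<^sup>2 * g - Vi * Vk * b * s - Vi * Vk * g * k"
    unfolding Pki_def s_def k_def v by (simp add: algebra_simps)
  moreover have "Vi * Vk * g * k \<le> Vi * Vk * g * cos \<theta>"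
    using \<theta>(3) assms(5,6) by (intro mult_left_mono) auto
  ultimately show ?thesis
    using \<theta>(1,2) unfolding p q flow_region_line_def Pik_def Pki_def by force
qed

lemma flow_region_convex_comb_dominated:
  fixes E :: "('n \<times> 'n) set"
  assumes "simple_lines E"
    and "\<forall>i. V i > 0"
    and "\<forall>e\<in>E. g e \<ge> 0"
    and "\<forall>e\<in>E. - pi \<le> thlo e \<and> thlo e \<le> 0"
    and "\<forall>e\<in>E. 0 \<le> thhi e \<and> thhi e \<le> pi"
    and f1: "f1 \<in> flow_region E V g b thlo thhi" and f2: "f2 \<in> flow_region E V g b thlo thhi"
    and "0 \<le> u" "0 \<le> v" "u + v = 1"
  shows "\<exists>f\<in>flow_region E V g b thlo thhi. f \<le> (\<lambda>p. u * f1 p + v * f2 p)"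
proof -
  let ?line = "\<lambda>(i, k). flow_region_line (V i) (V k) (g (i, k)) (b (i, k)) (thlo (i, k)) (thhi (i, k))"
  have "\<exists>r\<in>?line e. fst r \<le> u * f1 e + v * f2 e \<and>
          snd r \<le> u * f1 (prod.swap e) + v * f2 (prod.swap e)" if "e \<in> E" for e
  proof -
    obtain i k where e: "e = (i, k)" by fastforce
    let ?L = "flow_region_line (V i) (V k) (g e) (b e) (thlo e) (thhi e)"
    have mem: "(f1 (i, k), f1 (k, i)) \<in> ?L" "(f2 (i, k), f2 (k, i)) \<in> ?L"
      using that f1 f2 unfolding e flow_region_def by auto
    have "0 \<le> V i * V k" using assms(2) by (simp add: less_imp_le)
    moreover have "- pi \<le> thlo e" "thlo e \<le> 0" "0 \<le> thhi e" "thhi e \<le> pi" "0 \<le> g e"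
      using that assms(3-5) by auto
    ultimately have "\<exists>r\<in>?L. fst r \<le> u * fst (f1 (i, k), f1 (k, i)) + v * fst (f2 (i, k), f2 (k, i))
        \<and> snd r \<le> u * snd (f1 (i, k), f1 (k, i)) + v * snd (f2 (i, k), f2 (k, i))"
      by (intro flow_region_line_convex_comb_dominated mem assms(8-10))
    then show ?thesis unfolding e by simp
  qed
  then obtain R where R: "\<And>e. e \<in> E \<Longrightarrow> R e \<in> ?line e \<and> fst (R e) \<le> u * f1 e + v * f2 e \<and>
          snd (R e) \<le> u * f1 (prod.swap e) + v * f2 (prod.swap e)"
    using bchoice[of E] by (metis (no_types, lifting))
  define f where "f p = (if p \<in> E then fst (R p)
    else if prod.swap p \<in> E then snd (R (prod.swap p)) else 0)" for p
  have "(f (i, k), f (k, i)) = R (i, k)" if "(i, k) \<in> E" for i k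
    using that assms(1) unfolding f_def simple_lines_def by auto
  moreover have "f p = 0" if "p \<notin> adj E" for p
    using that unfolding f_def adj_def by (cases p) auto
  ultimately have "f \<in> flow_region E V g b thlo thhi"
    using R unfolding flow_region_def by auto
  moreover have "f p \<le> u * f1 p + v * f2 p" for p
  proof -
    consider "p \<in> E" | "p \<notin> E" "prod.swap p \<in> E" | "p \<notin> adj E"
      unfolding adj_def by (cases p) auto
    then show ?thesis
    proof cases
      case 1
      with R[of p] show ?thesis by (simp add: f_def)
    next
      case 2
      with R[of "prod.swap p"] show ?thesis by (simp add: f_def)
    next
      case 3
      then have "f1 p = 0" "f2 p = 0" using f1 f2 unfolding flow_region_def by blast+
      with 3 show ?thesis unfolding f_def adj_def by (cases p) auto
    qed
  qed
  ultimately show ?thesis by (auto simp: le_fun_def)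
qed

lemma inj_map_convex_comb:
  "inj_map E (\<lambda>p. u * f1 p + v * f2 p) = u *\<^sub>R inj_map E f1 + v *\<^sub>R inj_map E f2"
  by (simp add: inj_map_def vec_eq_iff sum.distrib sum_distrib_left)

lemma inj_map_mono: "f \<le> f' \<Longrightarrow> inj_map E f \<le> inj_map E f'"
  unfolding inj_map_def less_eq_vec_def le_fun_def by (auto intro: sum_mono)

definition upper_closure :: "(real ^ 'n) set \<Rightarrow> (real ^ 'n) set" where
  "upper_closure A = {y. \<exists>x\<in>A. x \<le> y}"

lemma pareto_iff_no_less: "x \<in> pareto A \<longleftrightarrow> x \<in> A \<and> (\<forall>y\<in>A. \<not> y < x)"
  unfolding pareto_def less_vec_def less_eq_vec_def by (auto simp: not_le)

lemma pareto_eq_if_dominated: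
  assumes "A \<subseteq> B" "B \<subseteq> upper_closure A"
  shows "pareto A = pareto B"
proof (intro set_eqI iffI)
  fix x assume x: "x \<in> pareto A"
  have "\<not> y < x" if y: "y \<in> B" for y
  proof
    assume "y < x"
    moreover obtain z where "z \<in> A" "z \<le> y" using y assms(2) unfolding upper_closure_def by blast
    ultimately show False using x by (auto simp: pareto_iff_no_less dest: le_less_trans)
  qed
  with x assms(1) show "x \<in> pareto B" by (auto simp: pareto_iff_no_less)
next
  fix x assume x: "x \<in> pareto B"
  then obtain z where z: "z \<in> A" "z \<le> x" using assms(2) unfolding upper_closure_def pareto_iff_no_less by blast
  with x assms(1) have "z = x" by (auto simp: pareto_iff_no_less order.order_iff_strict)
  with x z(1) assms(1) show "x \<in> pareto A" by (auto simp: pareto_iff_no_less)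
qed

lemma convex_upper_closure_injection_region:
  fixes E :: "('n::finite \<times> 'n) set"
  assumes "simple_lines E"
    and "\<forall>i. V i > 0"
    and "\<forall>e\<in>E. g e \<ge> 0"
    and "\<forall>e\<in>E. - pi \<le> thlo e \<and> thlo e \<le> 0"
    and "\<forall>e\<in>E. 0 \<le> thhi e \<and> thhi e \<le> pi"
  shows "convex (upper_closure (injection_region E V g b thlo thhi))"
proof (rule convexI)
  fix x y :: "real ^ 'n" and u v :: real
  assume "x \<in> upper_closure (injection_region E V g b thlo thhi)"
    and "y \<in> upper_closure (injection_region E V g b thlo thhi)"
    and uv: "0 \<le> u" "0 \<le> v" "u + v = 1"
  then obtain f1 f2 where f1: "f1 \<in> flow_region E V g b thlo thhi" "inj_map E f1 \<le> x"
    and f2: "f2 \<in> flow_region E V g b thlo thhi" "inj_map E f2 \<le> y"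
    unfolding upper_closure_def injection_region_def by blast
  obtain f where f: "f \<in> flow_region E V g b thlo thhi" "f \<le> (\<lambda>p. u * f1 p + v * f2 p)"
    using flow_region_convex_comb_dominated[OF assms f1(1) f2(1) uv] by blast
  have "inj_map E f \<le> inj_map E (\<lambda>p. u * f1 p + v * f2 p)"
    using f(2) by (rule inj_map_mono)
  also have "\<dots> = u *\<^sub>R inj_map E f1 + v *\<^sub>R inj_map E f2"
    by (rule inj_map_convex_comb)
  also have "\<dots> \<le> u *\<^sub>R x + v *\<^sub>R y"
    using f1(2) f2(2) uv by (intro add_mono scaleR_left_mono) auto
  finally show "u *\<^sub>R x + v *\<^sub>R y \<in> upper_closure (injection_region E V g b thlo thhi)"
    using f(1) unfolding upper_closure_def injection_region_def by blast
qed

theorem lemma2: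
  fixes E :: "('n::finite \<times> 'n) set"
    and V :: "'n \<Rightarrow> real"
    and g b thlo thhi :: "'n \<times> 'n \<Rightarrow> real"
  assumes "is_tree E"
    and "\<forall>i. V i > 0"
    and "\<forall>e\<in>E. g e \<ge> 0 \<and> b e \<ge> 0"
    and "\<forall>e\<in>E. - pi \<le> thlo e \<and> thlo e \<le> 0"
    and "\<forall>e\<in>E. 0 \<le> thhi e \<and> thhi e \<le> pi"
  shows "pareto (injection_region E V g b thlo thhi)
         = pareto (convex hull (injection_region E V g b thlo thhi))"
proof (rule pareto_eq_if_dominated)
  \<comment> \<open>Since the flow region is already a product over the lines, the tree hypothesis is only
    needed for the lines being simple, and the sign of b is irrelevant.\<close>
  let ?P = "injection_region E V g b thlo thhi"
  have "simple_lines E" using assms(1) by (simp add: is_tree_def)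
  with assms(2-5) have "convex (upper_closure ?P)"
    by (intro convex_upper_closure_injection_region) auto
  moreover have "?P \<subseteq> upper_closure ?P" by (auto simp: upper_closure_def)
  ultimately show "convex hull ?P \<subseteq> upper_closure ?P" by (rule hull_minimal[rotated])
qed (rule hull_subset)

end
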